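(* Let $G^1=\langle V^1,s^1_1,s^1_2,\mathsf{null}^1,\mathsf{root}^1\rangle$ and $G^2=\langle V^2,s^2_1,s^2_2,\mathsf{null}^2,\mathsf{root}^2\rangle$ be graphs and let $G^1\times G^2$ be their Cartesian product. Then for every graph $G$: $G\to G^1\times G^2$ if and only if $G\to G^1$ and $G\to G^2$.
   Context: A graph is a tuple $\langle V,s_1,s_2,\mathsf{null},\mathsf{root}\rangle$ with $V$ finite, $\mathsf{root}\neq\mathsf{null}$ in $V$, $s_1,s_2\subseteq V\times V$, and $\langle\mathsf{null},x\rangle\in s_i$ iff $x=\mathsf{null}$. A homomorphism $h:G\to G'$ is a map on nodes with $\langle x,y\rangle\in s_i\Rightarrow\langle h(x),h(y)\rangle\in s_i'$, $h(x)=\mathsf{root}'$ iff $x=\mathsf{root}$, $h(x)=\mathsf{null}'$ iff $x=\mathsf{null}$; $G\to G'$ means one exists. The Cartesian product $G^0=G^1\times G^2=\langle V^0,s^0_1,s^0_2,\mathsf{null}^0,\mathsf{root}^0\rangle$ has $\mathsf{null}^0=\langle\mathsf{null}^1,\mathsf{null}^2\rangle$, $\mathsf{root}^0=\langle\mathsf{root}^1,\mathsf{root}^2\rangle$, $V^0=\{\mathsf{null}^0,\mathsf{root}^0\}\cup(V^1\setminus\{\mathsf{null}^1,\mathsf{root}^1\})\times(V^2\setminus\{\mathsf{null}^2,\mathsf{root}^2\})$, and for $i\in\{1,2\}$, $s^0_i=\{\langle\langle x^1,x^2\rangle,\langle y^1,y^2\rangle\rangle : \langle x^1,x^2\rangle,\langle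 y^1,y^2\rangle\in V^0,\ \langle x^1,y^1\rangle\in s^1_i,\ \langle x^2,y^2\rangle\in s^2_i\}$. *)

theory Defs
  imports Main
begin

record 'a graph =
  verts :: "'a set"
  succ1 :: "('a \<times> 'a) set"
  succ2 :: "('a \<times> 'a) set"
  gnull :: 'a
  groot :: 'a

definition is_graph :: "'a graph \<Rightarrow> bool" where
  "is_graph G \<longleftrightarrow>
     finite (verts G) \<and> groot G \<in> verts G \<and> gnull G \<in> verts G \<and>
     groot G \<noteq> gnull G \<and>
     succ1 G \<subseteq> verts G \<times> verts G \<and> succ2 G \<subseteq> verts G \<times> verts G \<and>
     (\<forall>x. (gnull G, x) \<in> succ1 G \<longleftrightarrow> x = gnull G) \<and>
     (\<forall>x. (gnull G, x) \<in> succ2 G \<longleftrightarrow> x = gnull G)"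

definition is_hom :: "'a graph \<Rightarrow> ('a \<Rightarrow> 'b) \<Rightarrow> 'b graph \<Rightarrow> bool" where
  "is_hom G h G' \<longleftrightarrow>
     (\<forall>x\<in>verts G. h x \<in> verts G') \<and>
     (\<forall>x y. (x, y) \<in> succ1 G \<longrightarrow> (h x, h y) \<in> succ1 G') \<and>
     (\<forall>x y. (x, y) \<in> succ2 G \<longrightarrow> (h x, h y) \<in> succ2 G') \<and>
     (\<forall>x\<in>verts G. h x = groot G' \<longleftrightarrow> x = groot G) \<and>
     (\<forall>x\<in>verts G. h x = gnull G' \<longleftrightarrow> x = gnull G)"

definition hom_exists :: "'a graph \<Rightarrow> 'b graph \<Rightarrow> bool" (infix "\<rightarrow>\<^sub>G" 50) where
  "G \<rightarrow>\<^sub>G G' \<longleftrightarrow> (\<exists>h. is_hom G h G')"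

definition graph_prod :: "'a graph \<Rightarrow> 'b graph \<Rightarrow> ('a \<times> 'b) graph" where
  "graph_prod G1 G2 =
    (let V0 = {(gnull G1, gnull G2), (groot G1, groot G2)} \<union>
              ((verts G1 - {gnull G1, groot G1}) \<times> (verts G2 - {gnull G2, groot G2}))
     in \<lparr> verts = V0,
          succ1 = {((x1, x2), (y1, y2)). (x1, x2) \<in> V0 \<and> (y1, y2) \<in> V0 \<and>
                     (x1, y1) \<in> succ1 G1 \<and> (x2, y2) \<in> succ1 G2},
          succ2 = {((x1, x2), (y1, y2)). (x1, x2) \<in> V0 \<and> (y1, y2) \<in> V0 \<and>
                     (x1, y1) \<in> succ2 G1 \<and> (x2, y2) \<in> succ2 G2},
          gnull = (gnull G1, gnull G2),
          groot = (groot G1, groot G2) \<rparr>)"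

end

theory Submission
  imports Defs
begin

(* The product is the categorical product: the projections are homomorphisms out of it, and
   two homomorphisms into the factors pair to one into the product. *)

lemma graph_prod_simps [simp]:
  "verts (graph_prod G1 G2) = {(gnull G1, gnull G2), (groot G1, groot G2)} \<union>
     ((verts G1 - {gnull G1, groot G1}) \<times> (verts G2 - {gnull G2, groot G2}))"
  "gnull (graph_prod G1 G2) = (gnull G1, gnull G2)"
  "groot (graph_prod G1 G2) = (groot G1, groot G2)"
  "((x1, x2), (y1, y2)) \<in> succ1 (graph_prod G1 G2) \<longleftrightarrow>
     (x1, x2) \<in> verts (graph_prod G1 G2) \<and> (y1, y2) \<in> verts (graph_prod G1 G2) \<and>
     (x1, y1) \<in> succ1 G1 \<and> (x2, y2) \<in> succ1 G2"
  "((x1, x2), (y1, y2)) \<in> succ2 (graph_prod G1 G2) \<longleftrightarrow>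
     (x1, x2) \<in> verts (graph_prod G1 G2) \<and> (y1, y2) \<in> verts (graph_prod G1 G2) \<and>
     (x1, y1) \<in> succ2 G1 \<and> (x2, y2) \<in> succ2 G2"
  by (simp_all add: graph_prod_def Let_def)

lemma is_hom_comp:
  assumes "is_hom G h G'" and "is_hom G' g G''"
  shows "is_hom G (g \<circ> h) G''"
  using assms unfolding is_hom_def by simp

lemma is_hom_fst:
  assumes "is_graph G1"
  shows "is_hom (graph_prod G1 G2) fst G1"
  using assms unfolding is_hom_def is_graph_def by fastforce

lemma is_hom_snd:
  assumes "is_graph G2"
  shows "is_hom (graph_prod G1 G2) snd G2"
  using assms unfolding is_hom_def is_graph_def by fastforce

lemma is_hom_pair:
  assumes "is_hom G h1 G1" and "is_hom G h2 G2" and "is_graph G"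
  shows "is_hom G (\<lambda>x. (h1 x, h2 x)) (graph_prod G1 G2)"
proof -
  \<comment> \<open>Both maps reflect root and null, so (h1 x, h2 x) is never one of the mixed
    pairs excluded from the product.\<close>
  have verts_pair: "(h1 x, h2 x) \<in> verts (graph_prod G1 G2)" if "x \<in> verts G" for x
    using assms(1,2) that unfolding is_hom_def by auto
  have "x \<in> verts G \<and> y \<in> verts G" if "(x, y) \<in> succ1 G \<or> (x, y) \<in> succ2 G" for x y
    using assms(3) that unfolding is_graph_def by fastforce
  with verts_pair assms(1,2) show ?thesis
    unfolding is_hom_def by fastforce
qed

theorem proposition25:
  fixes G1 :: "'a graph" and G2 :: "'b graph" and G :: "'c graph"
  assumes "is_graph G1" and "is_graph G2" and "is_graph G"
  shows "G \<rightarrow>\<^sub>G graph_prod G1 G2 \<longleftrightarrow> (G \<rightarrow>\<^sub>G G1 \<and> G \<rightarrow>\<^sub>G G2)"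
proof
  assume "G \<rightarrow>\<^sub>G graph_prod G1 G2"
  then obtain h where "is_hom G h (graph_prod G1 G2)"
    unfolding hom_exists_def by blast
  then have "is_hom G (fst \<circ> h) G1" and "is_hom G (snd \<circ> h) G2"
    using is_hom_comp is_hom_fst[OF assms(1)] is_hom_snd[OF assms(2)] by blast+
  then show "G \<rightarrow>\<^sub>G G1 \<and> G \<rightarrow>\<^sub>G G2"
    unfolding hom_exists_def by blast
next
  assume "G \<rightarrow>\<^sub>G G1 \<and> G \<rightarrow>\<^sub>G G2"
  then obtain h1 h2 where "is_hom G h1 G1" and "is_hom G h2 G2"
    unfolding hom_exists_def by blast
  then show "G \<rightarrow>\<^sub>G graph_prod G1 G2"
    using is_hom_pair[OF _ _ assms(3)] unfolding hom_exists_def by blast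
qed

end
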